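(* Let $m$ be a positive integer and $\sigma$ a composition of $m$. The maps $\Phi_\sigma:\Delta(\mathcal{T},m)\to\Gamma(\mathsf{hypo},\sigma)$, $Q\mapsto\pi_\sigma(Q)$, and $\Gamma(\mathsf{hypo},\sigma)\to\Delta(\mathcal{T},m)$, $T\mapsto\overline{T}$, are mutually inverse isomorphisms of unlabelled directed graphs.
   Context: Entries are positive integers. A quasi-array of size $m$ is an array $Q$ with cells $(i,j)$, $1\le i\le m$, $1\le j\le m-i+1$, each containing a positive integer $Q_{(i,j)}$, with $Q_{(1,j)}\le Q_{(1,j+1)}$ and $Q_{(i,j)}=Q_{(1,i+j-1)}+i-1$. The $k$-th diagonal is the set of cells with $i+j-1=k$. For $Q$ of size $m$: $D_m$ is always defined and adds $1$ to every entry of the $m$-th diagonal; for $1\le k\le m-1$, $D_k$ is defined iff $Q_{(1,k)}<Q_{(1,k+1)}$, and then adds $1$ to all entries of the $k$-th diagonal; $D_k$ is undefined for $k>m$. $\Delta(\mathcal{T},m)$ is the directed graph whose vertices are the quasi-arrays of size $m$, with an edge $Q\to D_k(Q)$ labelled $k$ whenever $D_k$ is defined on $Q$. A quasi-ribbon tableau of shape $\sigma=(\sigma_1,\dots,\sigma_r)$ is a filling with positive integers of the diagram having $\sigma_i$ cells in row $i$, the leftmost cell of row $i+1$ directly below the rightmost cell of row $i$, weakly increasing along rows and strictly increasing down columns. Its column reading is the word read column by column left to right, each column bottom to top. Quasi-Kashiwara operators on words: if $u$ contains a subsequence $(i+1)\,i$, $f_i(u)$ is undefined; otherwise $f_i(u)$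 replaces the rightmost $i$ by $i+1$ (undefined if no $i$ occurs). $\Gamma(\mathsf{hypo},\sigma)$ is the directed graph whose vertices are the quasi-ribbon tableaux of shape $\sigma$ (identified with their column readings), with an edge $u\to f_i(u)$ labelled $i$ whenever $f_i(u)$ is defined ($i\ge1$); it is a connected component of the graph on all words. $\pi_\sigma(Q)$ is the quasi-ribbon tableau formed by the cells of $Q$ making up a quasi-ribbon diagram of shape $\sigma$ whose first cell is $(1,1)$, with their entries from $Q$. For a quasi-ribbon tableau $T$ of shape $\sigma$ with $m$ cells, $\overline{T}$ is the unique quasi-array of size $m$ with $\pi_\sigma(\overline{T})=T$ (obtained by placing $T$ with its top-left cell at $(1,1)$ and filling each diagonal as a sequence of consecutive integers increasing downward). *)

theory Defs
  imports Main
begin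

text \<open>Arrays and tableaux are functions nat \<Rightarrow> nat \<Rightarrow> nat indexed by (row, column),
  both 1-based, with value 0 outside the relevant set of cells.\<close>

definition qcells :: "nat \<Rightarrow> (nat \<times> nat) set" where
  "qcells m = {(i,j). 1 \<le> i \<and> i \<le> m \<and> 1 \<le> j \<and> j \<le> m - i + 1}"

definition quasi_array :: "nat \<Rightarrow> (nat \<Rightarrow> nat \<Rightarrow> nat) \<Rightarrow> bool" where
  "quasi_array m Q \<longleftrightarrow>
     (\<forall>i j. (i,j) \<in> qcells m \<longrightarrow> 0 < Q i j) \<and>
     (\<forall>i j. (i,j) \<notin> qcells m \<longrightarrow> Q i j = 0) \<and>
     (\<forall>j. 1 \<le> j \<and> j < m \<longrightarrow> Q 1 j \<le> Q 1 (j+1)) \<and>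
     (\<forall>i j. (i,j) \<in> qcells m \<longrightarrow> Q i j = Q 1 (i+j-1) + i - 1)"

definition Dop :: "nat \<Rightarrow> nat \<Rightarrow> (nat \<Rightarrow> nat \<Rightarrow> nat) \<Rightarrow> (nat \<Rightarrow> nat \<Rightarrow> nat) option" where
  "Dop m k Q =
     (if (1 \<le> k \<and> k = m) \<or> (1 \<le> k \<and> k < m \<and> Q 1 k < Q 1 (k+1))
      then Some (\<lambda>i j. if (i,j) \<in> qcells m \<and> i + j - 1 = k then Q i j + 1 else Q i j)
      else None)"

definition Delta_edge :: "nat \<Rightarrow> (nat \<Rightarrow> nat \<Rightarrow> nat) \<Rightarrow> (nat \<Rightarrow> nat \<Rightarrow> nat) \<Rightarrow> bool" where
  "Delta_edge m Q Q' \<longleftrightarrow> (\<exists>k. Dop m k Q = Some Q')"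

definition composition :: "nat list \<Rightarrow> nat \<Rightarrow> bool" where
  "composition \<sigma> m \<longleftrightarrow> \<sigma> \<noteq> [] \<and> (\<forall>x\<in>set \<sigma>. 0 < x) \<and> sum_list \<sigma> = m"

text \<open>Column of the leftmost cell of row r (1-based): row r+1 starts directly
  below the rightmost cell of row r.\<close>
definition row_start :: "nat list \<Rightarrow> nat \<Rightarrow> nat" where
  "row_start \<sigma> r = 1 + sum_list (map (\<lambda>x. x - 1) (take (r - 1) \<sigma>))"

definition ribbon_cells :: "nat list \<Rightarrow> (nat \<times> nat) set" where
  "ribbon_cells \<sigma> = {(r,c). 1 \<le> r \<and> r \<le> length \<sigma> \<and> row_start \<sigma> r \<le> c \<and>
                              c < row_start \<sigma> r + \<sigma> ! (r - 1)}"

definition qrt :: "nat list \<Rightarrow> (nat \<Rightarrow> nat \<Rightarrow> nat) \<Rightarrow> bool" where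
  "qrt \<sigma> T \<longleftrightarrow>
     (\<forall>r c. (r,c) \<in> ribbon_cells \<sigma> \<longrightarrow> 0 < T r c) \<and>
     (\<forall>r c. (r,c) \<notin> ribbon_cells \<sigma> \<longrightarrow> T r c = 0) \<and>
     (\<forall>r c. (r,c) \<in> ribbon_cells \<sigma> \<and> (r,c+1) \<in> ribbon_cells \<sigma> \<longrightarrow> T r c \<le> T r (c+1)) \<and>
     (\<forall>r c. (r,c) \<in> ribbon_cells \<sigma> \<and> (r+1,c) \<in> ribbon_cells \<sigma> \<longrightarrow> T r c < T (r+1) c)"

text \<open>Column reading: columns left to right, each column bottom to top.
  All cells lie in columns 1..m where m = sum_list sigma.\<close>
definition col_reading :: "nat list \<Rightarrow> (nat \<Rightarrow> nat \<Rightarrow> nat) \<Rightarrow> nat list" where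
  "col_reading \<sigma> T =
     concat (map (\<lambda>c. map (\<lambda>r. T r c)
                           (rev (filter (\<lambda>r. (r,c) \<in> ribbon_cells \<sigma>) [1..<length \<sigma> + 1])))
                 [1..<sum_list \<sigma> + 1])"

definition qk_f :: "nat \<Rightarrow> nat list \<Rightarrow> nat list option" where
  "qk_f i u =
     (if (\<exists>p q. p < q \<and> q < length u \<and> u ! p = i + 1 \<and> u ! q = i) \<or> i \<notin> set u then None
      else Some (u[(GREATEST p. p < length u \<and> u ! p = i) := i + 1]))"

definition Gamma_edge :: "nat list \<Rightarrow> (nat \<Rightarrow> nat \<Rightarrow> nat) \<Rightarrow> (nat \<Rightarrow> nat \<Rightarrow> nat) \<Rightarrow> bool" where
  "Gamma_edge \<sigma> T T' \<longleftrightarrow>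
     (\<exists>i. 1 \<le> i \<and> qk_f i (col_reading \<sigma> T) = Some (col_reading \<sigma> T'))"

definition pi_sigma :: "nat list \<Rightarrow> (nat \<Rightarrow> nat \<Rightarrow> nat) \<Rightarrow> (nat \<Rightarrow> nat \<Rightarrow> nat)" where
  "pi_sigma \<sigma> Q = (\<lambda>r c. if (r,c) \<in> ribbon_cells \<sigma> then Q r c else 0)"

definition bar :: "nat list \<Rightarrow> (nat \<Rightarrow> nat \<Rightarrow> nat) \<Rightarrow> (nat \<Rightarrow> nat \<Rightarrow> nat)" where
  "bar \<sigma> T = (THE Q. quasi_array (sum_list \<sigma>) Q \<and> pi_sigma \<sigma> Q = T)"

end

theory Submission
  imports Defs
begin

text \<open>A quasi-array is determined by its weakly increasing first row q through
  Q(i,j) = q(i+j-1) + i - 1, and a ribbon of m cells meets each of the m diagonals in exactly one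
  cell x_d, consecutive diagonals being linked by a step right or a step down. Hence restriction
  to the ribbon is injective, and a tableau T is the restriction of the quasi-array with first row
  q(d) = T(x_d) - row(x_d) + 1, which the tableau conditions make positive and weakly increasing.

  An edge on either side raises exactly one ribbon cell by one: D_k raises x_k, and f_i changes one
  letter of the column reading. Conversely, if D_k is defined and v is the entry of x_k, every other
  cell with entry v lies left of x_k in its row and every cell with entry v + 1 lies in a later
  column; so x_k carries the rightmost v of the reading, no v + 1 precedes a v, and f_v raises
  exactly x_k. That D_k is defined is forced by the first row of the raised array staying weakly
  increasing.\<close>

section \<open>Words and quasi-Kashiwara operators\<close>

lemma sorted_wrt_nth_less_iff:
  assumes "sorted_wrt R xs" "asymp R" "i < length xs" "j < length xs"
  shows "i < j \<longleftrightarrow> R (xs ! i) (xs ! j)"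
proof
  assume "i < j"
  with assms(1,4) show "R (xs ! i) (xs ! j)"
    using sorted_wrt_nth_less by blast
next
  assume R: "R (xs ! i) (xs ! j)"
  show "i < j"
  proof (rule ccontr)
    assume "\<not> i < j"
    then have "j < i \<or> i = j"
      by linarith
    with assms(1,3) have "R (xs ! j) (xs ! i) \<or> i = j"
      using sorted_wrt_nth_less by blast
    with R assms(2) show False
      by (auto dest: asympD)
  qed
qed

lemma map_eq_list_update_iff:
  assumes "distinct xs" "p < length xs"
  shows "map g xs = (map f xs)[p := b] \<longleftrightarrow> (\<forall>y\<in>set xs. g y = (if y = xs ! p then b else f y))"
proof -
  have "(map f xs)[p := b] = map (f(xs ! p := b)) xs"
    using assms by (auto intro: nth_equalityI simp: nth_list_update nth_eq_iff_index_eq)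
  then show ?thesis by (auto simp: map_eq_conv)
qed

lemma qk_f_eq_SomeD:
  assumes "qk_f i u = Some w"
  obtains p where "p < length u" "u ! p = i" "w = u[p := i + 1]"
proof -
  have "i \<in> set u" and w: "w = u[(GREATEST p. p < length u \<and> u ! p = i) := i + 1]"
    using assms unfolding qk_f_def by (auto split: if_splits)
  have "(\<lambda>p. p < length u \<and> u ! p = i) (GREATEST p. p < length u \<and> u ! p = i)"
    by (rule GreatestI_ex_nat[where b = "length u"]) (use \<open>i \<in> set u\<close> in \<open>auto simp: in_set_conv_nth\<close>)
  with w that show thesis by blast
qed

lemma qk_f_eq_SomeI:
  assumes "p < length u" "u ! p = i"
    and "\<And>q. q < length u \<Longrightarrow> u ! q = i \<Longrightarrow> q \<le> p"
    and "\<And>q. q < length u \<Longrightarrow> u ! q = i + 1 \<Longrightarrow> p < q"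
  shows "qk_f i u = Some (u[p := i + 1])"
proof -
  have "(GREATEST q. q < length u \<and> u ! q = i) = p"
    using assms(1-3) by (intro Greatest_equality) auto
  moreover have "\<not> (\<exists>a b. a < b \<and> b < length u \<and> u ! a = i + 1 \<and> u ! b = i)"
  proof
    assume "\<exists>a b. a < b \<and> b < length u \<and> u ! a = i + 1 \<and> u ! b = i"
    then obtain a b where ab: "a < b" "b < length u" "u ! a = i + 1" "u ! b = i"
      by blast
    then have "b \<le> p" "p < a"
      using assms(3,4) by auto
    with ab(1) show False
      by linarith
  qed
  moreover have "i \<in> set u"
    using assms(1,2) nth_mem by blast
  ultimately show ?thesis
    unfolding qk_f_def by simp
qed

section \<open>Quasi-arrays\<close>

lemma qcells_diag: "(i, j) \<in> qcells m \<Longrightarrow> 1 \<le> i \<and> 1 \<le> i + j - 1 \<and> i + j - 1 \<le> m"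
  unfolding qcells_def by auto

lemma quasi_array_entry:
  "quasi_array m Q \<Longrightarrow> (i, j) \<in> qcells m \<Longrightarrow> Q i j = Q 1 (i + j - 1) + i - 1"
  unfolding quasi_array_def by blast

lemma quasi_array_outside: "quasi_array m Q \<Longrightarrow> (i, j) \<notin> qcells m \<Longrightarrow> Q i j = 0"
  unfolding quasi_array_def by blast

lemma quasi_array_pos: "quasi_array m Q \<Longrightarrow> (i, j) \<in> qcells m \<Longrightarrow> 0 < Q i j"
  unfolding quasi_array_def by blast

lemma quasi_array_first_row_mono:
  assumes "quasi_array m Q" "1 \<le> a" "a \<le> b" "b \<le> m"
  shows "Q 1 a \<le> Q 1 b"
  using assms(3,4)
proof (induction b rule: dec_induct)
  case (step n)
  then have "Q 1 n \<le> Q 1 (n + 1)"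
    using assms(1,2) unfolding quasi_array_def by auto
  with step show ?case by simp
qed simp

lemma quasi_array_eqI:
  assumes "quasi_array m Q" "quasi_array m Q'" "\<And>d. 1 \<le> d \<Longrightarrow> d \<le> m \<Longrightarrow> Q 1 d = Q' 1 d"
  shows "Q = Q'"
proof (intro ext)
  fix i j
  show "Q i j = Q' i j"
  proof (cases "(i, j) \<in> qcells m")
    case True
    with qcells_diag[OF True] show ?thesis
      using assms quasi_array_entry by metis
  qed (use assms quasi_array_outside in metis)
qed

definition quasi_array_of_row :: "nat \<Rightarrow> (nat \<Rightarrow> nat) \<Rightarrow> nat \<Rightarrow> nat \<Rightarrow> nat" where
  "quasi_array_of_row m q = (\<lambda>i j. if (i, j) \<in> qcells m then q (i + j - 1) + i - 1 else 0)"

lemma quasi_array_of_row: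
  assumes "\<And>d. 1 \<le> d \<Longrightarrow> d \<le> m \<Longrightarrow> 0 < q d"
    and "\<And>d. 1 \<le> d \<Longrightarrow> d < m \<Longrightarrow> q d \<le> q (d + 1)"
  shows "quasi_array m (quasi_array_of_row m q)"
proof -
  have first_row: "quasi_array_of_row m q 1 d = q d" if "1 \<le> d" "d \<le> m" for d
    using that by (simp add: quasi_array_of_row_def qcells_def)
  show ?thesis
    unfolding quasi_array_def
  proof (intro conjI allI impI)
    fix i j
    assume "(i, j) \<in> qcells m"
    with qcells_diag[OF this] show "0 < quasi_array_of_row m q i j"
      using assms(1)[of "i + j - 1"] by (simp add: quasi_array_of_row_def)
    show "quasi_array_of_row m q i j = quasi_array_of_row m q 1 (i + j - 1) + i - 1"
      using \<open>(i, j) \<in> qcells m\<close> qcells_diag first_row by (simp add: quasi_array_of_row_def)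
  next
    fix j
    assume "1 \<le> j \<and> j < m"
    then show "quasi_array_of_row m q 1 j \<le> quasi_array_of_row m q 1 (j + 1)"
      using assms(2) first_row by simp
  qed (simp add: quasi_array_of_row_def)
qed

section \<open>Diagonals of a quasi-ribbon diagram\<close>

lemma sum_list_map_minus_one:
  assumes "\<forall>x\<in>set xs. 0 < (x::nat)"
  shows "sum_list (map (\<lambda>x. x - 1) xs) + length xs = sum_list xs"
  using assms by (induction xs) auto

locale quasi_ribbon =
  fixes \<sigma> :: "nat list" and m :: nat
  assumes composition: "composition \<sigma> m"
begin

lemma composition_parts_pos: "x \<in> set \<sigma> \<Longrightarrow> 0 < x"
  using composition unfolding composition_def by auto

lemma sum_list_composition: "sum_list \<sigma> = m"
  using composition unfolding composition_def by auto

definition last_diag :: "nat \<Rightarrow> nat" where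
  "last_diag r = sum_list (take r \<sigma>)"

lemma last_diag_length: "last_diag (length \<sigma>) = m"
  by (simp add: last_diag_def sum_list_composition)

lemma last_diag_Suc: "r < length \<sigma> \<Longrightarrow> last_diag (Suc r) = last_diag r + \<sigma> ! r"
  by (simp add: last_diag_def take_Suc_conv_app_nth)

lemma last_diag_strict_mono: "r < r' \<Longrightarrow> r' \<le> length \<sigma> \<Longrightarrow> last_diag r < last_diag r'"
proof (induction r')
  case (Suc r')
  have "0 < \<sigma> ! r'"
    using Suc.prems composition_parts_pos by simp
  with Suc show ?case
    using last_diag_Suc[of r'] by (cases "r = r'") auto
qed simp

lemma last_diag_mono: "r \<le> r' \<Longrightarrow> r' \<le> length \<sigma> \<Longrightarrow> last_diag r \<le> last_diag r'"
  using last_diag_strict_mono by (cases "r = r'") (auto simp: less_imp_le)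

lemma last_diag_ge: "r \<le> length \<sigma> \<Longrightarrow> r \<le> last_diag r"
proof (induction r)
  case (Suc r)
  have "0 < \<sigma> ! r"
    using Suc.prems composition_parts_pos by simp
  with Suc show ?case
    using last_diag_Suc[of r] by simp
qed simp

lemma ribbon_cells_iff_last_diag:
  "(r, c) \<in> ribbon_cells \<sigma> \<longleftrightarrow>
     1 \<le> r \<and> r \<le> length \<sigma> \<and> 1 \<le> c \<and> last_diag (r - 1) < r + c - 1 \<and> r + c - 1 \<le> last_diag r"
proof (cases "1 \<le> r \<and> r \<le> length \<sigma>")
  case True
  let ?xs = "take (r - 1) \<sigma>"
  have "sum_list (map (\<lambda>x. x - 1) ?xs) + length ?xs = sum_list ?xs"
    using composition_parts_pos by (intro sum_list_map_minus_one) (auto dest: in_set_takeD)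
  moreover have "length ?xs = r - 1"
    using True by auto
  ultimately have "row_start \<sigma> r + (r - 1) = last_diag (r - 1) + 1"
    by (simp add: row_start_def last_diag_def)
  moreover have "last_diag r = last_diag (r - 1) + \<sigma> ! (r - 1)"
    using True last_diag_Suc[of "r - 1"] by (cases r) auto
  moreover have "r - 1 \<le> last_diag (r - 1)"
    using True by (intro last_diag_ge) auto
  ultimately show ?thesis
    using True unfolding ribbon_cells_def by (auto; linarith)
qed (auto simp: ribbon_cells_def)

definition diag_row :: "nat \<Rightarrow> nat" where
  "diag_row d = (LEAST r. d \<le> last_diag r)"

definition diag_col :: "nat \<Rightarrow> nat" where
  "diag_col d = d + 1 - diag_row d"

lemma diag_row:
  assumes "1 \<le> d" "d \<le> m"
  shows "1 \<le> diag_row d" "diag_row d \<le> length \<sigma>"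
    and "last_diag (diag_row d - 1) < d" "d \<le> last_diag (diag_row d)"
proof -
  have ex: "d \<le> last_diag (length \<sigma>)"
    using assms(2) last_diag_length by simp
  show le: "d \<le> last_diag (diag_row d)"
    unfolding diag_row_def using ex by (rule LeastI)
  show "diag_row d \<le> length \<sigma>"
    unfolding diag_row_def using ex by (rule Least_le)
  show pos: "1 \<le> diag_row d"
    using le assms(1) by (cases "diag_row d") (auto simp: last_diag_def)
  have "\<not> d \<le> last_diag (diag_row d - 1)"
    unfolding diag_row_def by (rule not_less_Least) (use pos in \<open>simp add: diag_row_def\<close>)
  then show "last_diag (diag_row d - 1) < d"
    by simp
qed

lemma diag_row_eqI:
  assumes "1 \<le> r" "r \<le> length \<sigma>" "last_diag (r - 1) < d" "d \<le> last_diag r"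
  shows "diag_row d = r"
  unfolding diag_row_def
proof (rule Least_equality)
  fix r'
  assume "d \<le> last_diag r'"
  then show "r \<le> r'"
    using assms last_diag_mono[of r' "r - 1"] by fastforce
qed (rule assms(4))

lemma ribbon_cells_iff_diag_row:
  "(r, c) \<in> ribbon_cells \<sigma> \<longleftrightarrow> 1 \<le> r \<and> 1 \<le> c \<and> r + c - 1 \<le> m \<and> diag_row (r + c - 1) = r"
proof
  assume "(r, c) \<in> ribbon_cells \<sigma>"
  then have cell: "1 \<le> r" "r \<le> length \<sigma>" "1 \<le> c" "last_diag (r - 1) < r + c - 1" "r + c - 1 \<le> last_diag r"
    unfolding ribbon_cells_iff_last_diag by auto
  moreover have "last_diag r \<le> m"
    using last_diag_mono[OF cell(2) order.refl] last_diag_length by simp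
  ultimately show "1 \<le> r \<and> 1 \<le> c \<and> r + c - 1 \<le> m \<and> diag_row (r + c - 1) = r"
    using diag_row_eqI by auto
next
  assume "1 \<le> r \<and> 1 \<le> c \<and> r + c - 1 \<le> m \<and> diag_row (r + c - 1) = r"
  then show "(r, c) \<in> ribbon_cells \<sigma>"
    using diag_row[of "r + c - 1"] unfolding ribbon_cells_iff_last_diag by auto
qed

lemma diag_cell:
  assumes "1 \<le> d" "d \<le> m"
  shows "(diag_row d, diag_col d) \<in> ribbon_cells \<sigma>" "diag_row d + diag_col d = d + 1" "1 \<le> diag_col d"
proof -
  have "diag_row d - 1 \<le> last_diag (diag_row d - 1)"
    using diag_row[OF assms] by (intro last_diag_ge) auto
  then have "diag_row d \<le> d"
    using diag_row[OF assms] by linarith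
  then show "diag_row d + diag_col d = d + 1" "1 \<le> diag_col d"
    by (simp_all add: diag_col_def)
  with assms show "(diag_row d, diag_col d) \<in> ribbon_cells \<sigma>"
    unfolding ribbon_cells_iff_diag_row using diag_row[OF assms] by simp
qed

lemma ribbon_cell_eq_diag_cell:
  assumes "(r, c) \<in> ribbon_cells \<sigma>"
  shows "diag_row (r + c - 1) = r" "diag_col (r + c - 1) = c"
  using assms unfolding ribbon_cells_iff_diag_row by (auto simp: diag_col_def)

lemma ribbon_cell_on_diag_iff:
  assumes "(r, c) \<in> ribbon_cells \<sigma>" "1 \<le> k" "k \<le> m"
  shows "r + c - 1 = k \<longleftrightarrow> (r, c) = (diag_row k, diag_col k)"
proof
  assume "(r, c) = (diag_row k, diag_col k)"
  then show "r + c - 1 = k"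
    using diag_cell(2)[OF assms(2,3)] by simp
qed (use ribbon_cell_eq_diag_cell[OF assms(1)] in simp)

lemma diag_row_mono: "d \<le> d' \<Longrightarrow> d' \<le> m \<Longrightarrow> diag_row d \<le> diag_row d'"
proof (cases "d' = 0")
  case False
  assume "d \<le> d'" "d' \<le> m"
  then have "d \<le> last_diag (diag_row d')"
    using diag_row(4)[of d'] False by simp
  then show ?thesis
    unfolding diag_row_def[of d] by (rule Least_le)
qed (simp add: diag_row_def)

lemma diag_row_Suc:
  assumes "1 \<le> d" "d < m"
  shows "diag_row (d + 1) = diag_row d \<or> diag_row (d + 1) = diag_row d + 1"
proof -
  have "diag_row (d + 1) \<le> diag_row d + 1"
  proof (cases "diag_row d < length \<sigma>")
    case True
    then have "d + 1 \<le> last_diag (diag_row d + 1)"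
      using diag_row(4)[of d] assms last_diag_Suc[of "diag_row d"] composition_parts_pos[of "\<sigma> ! diag_row d"] by simp
    then show ?thesis
      unfolding diag_row_def[of "d + 1"] by (rule Least_le)
  next
    case False
    then show ?thesis
      using diag_row(2)[of "d + 1"] assms by simp
  qed
  moreover have "diag_row d \<le> diag_row (d + 1)"
    using assms by (intro diag_row_mono) auto
  ultimately show ?thesis
    by linarith
qed

lemma ribbon_subset_qcells: "ribbon_cells \<sigma> \<subseteq> qcells m"
  unfolding qcells_def by (auto simp: ribbon_cells_iff_diag_row)

section \<open>Restriction to the ribbon\<close>

lemma quasi_array_ribbon_entry:
  "quasi_array m Q \<Longrightarrow> (r, c) \<in> ribbon_cells \<sigma> \<Longrightarrow> Q r c = Q 1 (r + c - 1) + r - 1"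
  using quasi_array_entry ribbon_subset_qcells by blast

lemma qrt_pi_sigma:
  assumes Q: "quasi_array m Q"
  shows "qrt \<sigma> (pi_sigma \<sigma> Q)"
  unfolding qrt_def
proof (intro conjI allI impI)
  fix r c
  assume "(r, c) \<in> ribbon_cells \<sigma>"
  then show "0 < pi_sigma \<sigma> Q r c"
    using quasi_array_pos[OF Q] ribbon_subset_qcells by (auto simp: pi_sigma_def)
next
  fix r c
  assume cells: "(r, c) \<in> ribbon_cells \<sigma> \<and> (r, c + 1) \<in> ribbon_cells \<sigma>"
  then have "Q 1 (r + c - 1) \<le> Q 1 (r + (c + 1) - 1)"
    by (intro quasi_array_first_row_mono[OF Q]) (auto simp: ribbon_cells_iff_diag_row)
  then show "pi_sigma \<sigma> Q r c \<le> pi_sigma \<sigma> Q r (c + 1)"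
    using cells quasi_array_ribbon_entry[OF Q] by (simp add: pi_sigma_def)
next
  fix r c
  assume cells: "(r, c) \<in> ribbon_cells \<sigma> \<and> (r + 1, c) \<in> ribbon_cells \<sigma>"
  then have "1 \<le> r" "1 \<le> c" "r + c \<le> m"
    by (auto simp: ribbon_cells_iff_diag_row)
  then have "Q 1 (r + c - 1) \<le> Q 1 (r + 1 + c - 1)"
    using quasi_array_first_row_mono[OF Q, of "r + c - 1" "r + c"] by simp
  then show "pi_sigma \<sigma> Q r c < pi_sigma \<sigma> Q (r + 1) c"
    using cells \<open>1 \<le> r\<close> quasi_array_ribbon_entry[OF Q] by (simp add: pi_sigma_def)
qed (simp add: pi_sigma_def)

lemma quasi_array_diag_cell:
  assumes "quasi_array m Q" "1 \<le> d" "d \<le> m"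
  shows "Q (diag_row d) (diag_col d) = Q 1 d + diag_row d - 1"
  using quasi_array_ribbon_entry[OF assms(1) diag_cell(1)] diag_cell(2) assms(2,3) by simp

lemma pi_sigma_inj:
  assumes "quasi_array m Q" "quasi_array m Q'" "pi_sigma \<sigma> Q = pi_sigma \<sigma> Q'"
  shows "Q = Q'"
proof (rule quasi_array_eqI[OF assms(1,2)])
  fix d
  assume d: "1 \<le> d" "d \<le> m"
  have "Q (diag_row d) (diag_col d) = Q' (diag_row d) (diag_col d)"
    using assms(3) diag_cell(1)[OF d] unfolding pi_sigma_def by meson
  then show "Q 1 d = Q' 1 d"
    using quasi_array_diag_cell[OF assms(1) d] quasi_array_diag_cell[OF assms(2) d] diag_row(1)[OF d]
    by simp
qed

lemma qrt_diag_step: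
  assumes T: "qrt \<sigma> T" and d: "1 \<le> d" "d < m"
  shows "T (diag_row d) (diag_col d) + diag_row (d + 1) \<le> T (diag_row (d + 1)) (diag_col (d + 1)) + diag_row d"
proof -
  have cells: "(diag_row d, diag_col d) \<in> ribbon_cells \<sigma>" "(diag_row (d + 1), diag_col (d + 1)) \<in> ribbon_cells \<sigma>"
    and diags: "diag_row d + diag_col d = d + 1" "diag_row (d + 1) + diag_col (d + 1) = d + 2"
    using diag_cell[of d] diag_cell[of "d + 1"] d by auto
  from diag_row_Suc[OF d] show ?thesis
  proof
    assume same_row: "diag_row (d + 1) = diag_row d"
    then have "diag_col (d + 1) = diag_col d + 1"
      using diags by linarith
    then have "T (diag_row d) (diag_col d) \<le> T (diag_row (d + 1)) (diag_col (d + 1))"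
      using T cells same_row unfolding qrt_def by simp
    with same_row show ?thesis
      by simp
  next
    assume next_row: "diag_row (d + 1) = diag_row d + 1"
    then have "diag_col (d + 1) = diag_col d"
      using diags by linarith
    then have "T (diag_row d) (diag_col d) < T (diag_row (d + 1)) (diag_col (d + 1))"
      using T cells next_row unfolding qrt_def by simp
    with next_row show ?thesis
      by simp
  qed
qed

lemma qrt_diag_row_le:
  assumes T: "qrt \<sigma> T" and d: "1 \<le> d" "d \<le> m"
  shows "diag_row d \<le> T (diag_row d) (diag_col d)"
  using d
proof (induction d rule: dec_induct)
  case base
  have "diag_row 1 \<le> 1"
    using diag_cell(2,3)[of 1] \<open>1 \<le> m\<close> by simp
  moreover have "0 < T (diag_row 1) (diag_col 1)"
    using T diag_cell(1)[of 1] \<open>1 \<le> m\<close> unfolding qrt_def by simp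
  ultimately show ?case
    by simp
next
  case (step n)
  then show ?case
    using qrt_diag_step[OF T, of n] by simp
qed

lemma qrt_lift:
  assumes T: "qrt \<sigma> T"
  obtains Q where "quasi_array m Q" "pi_sigma \<sigma> Q = T"
proof -
  define q where "q d = T (diag_row d) (diag_col d) + 1 - diag_row d" for d
  \<comment> \<open>By qrt_diag_row_le this subtraction is never truncated.\<close>
  have "quasi_array m (quasi_array_of_row m q)"
  proof (rule quasi_array_of_row)
    fix d
    assume "1 \<le> d" "d \<le> m"
    then show "0 < q d"
      using qrt_diag_row_le[OF T, of d] unfolding q_def by simp
  next
    fix d
    assume "1 \<le> d" "d < m"
    then show "q d \<le> q (d + 1)"
      using qrt_diag_step[OF T, of d] qrt_diag_row_le[OF T, of d] qrt_diag_row_le[OF T, of "d + 1"]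
      unfolding q_def by arith
  qed
  moreover have "pi_sigma \<sigma> (quasi_array_of_row m q) = T"
  proof (intro ext)
    fix r c
    show "pi_sigma \<sigma> (quasi_array_of_row m q) r c = T r c"
    proof (cases "(r, c) \<in> ribbon_cells \<sigma>")
      case True
      have "r \<le> T r c"
        using qrt_diag_row_le[OF T, of "r + c - 1"] True ribbon_cell_eq_diag_cell[OF True]
        by (auto simp: ribbon_cells_iff_diag_row)
      then show ?thesis
        using True ribbon_subset_qcells ribbon_cell_eq_diag_cell[OF True]
        by (auto simp: pi_sigma_def quasi_array_of_row_def q_def)
    next
      case False
      then show ?thesis
        using T unfolding pi_sigma_def qrt_def by simp
    qed
  qed
  ultimately show thesis
    using that by blast
qed

lemma bar_eqI:
  assumes "quasi_array m Q" "pi_sigma \<sigma> Q = T"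
  shows "bar \<sigma> T = Q"
  unfolding bar_def sum_list_composition
proof (rule the_equality)
  fix Q'
  assume "quasi_array m Q' \<and> pi_sigma \<sigma> Q' = T"
  then show "Q' = Q"
    using pi_sigma_inj[of Q' Q] assms by simp
qed (use assms in simp)

lemma bar_pi_sigma: "quasi_array m Q \<Longrightarrow> bar \<sigma> (pi_sigma \<sigma> Q) = Q"
  by (rule bar_eqI) simp_all

lemma bar_of_qrt:
  assumes "qrt \<sigma> T"
  shows "quasi_array m (bar \<sigma> T)" "pi_sigma \<sigma> (bar \<sigma> T) = T"
proof -
  obtain Q where "quasi_array m Q" "pi_sigma \<sigma> Q = T"
    using qrt_lift[OF assms] .
  moreover from this have "bar \<sigma> T = Q"
    by (rule bar_eqI)
  ultimately show "quasi_array m (bar \<sigma> T)" "pi_sigma \<sigma> (bar \<sigma> T) = T"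
    by simp_all
qed

section \<open>Raising one ribbon cell\<close>

lemma ribbon_entries_mono:
  assumes Q: "quasi_array m Q" and cells: "(r, c) \<in> ribbon_cells \<sigma>" "(r', c') \<in> ribbon_cells \<sigma>"
    and le: "r + c \<le> r' + c'"
  shows "r \<le> r'" "Q r c + r' \<le> Q r' c' + r"
proof -
  have d: "1 \<le> r" "1 \<le> r + c - 1" "r' + c' - 1 \<le> m"
    using cells by (auto simp: ribbon_cells_iff_diag_row)
  show "r \<le> r'"
    using diag_row_mono[of "r + c - 1" "r' + c' - 1"] ribbon_cell_eq_diag_cell cells le d by simp
  moreover have "Q 1 (r + c - 1) \<le> Q 1 (r' + c' - 1)"
    using quasi_array_first_row_mono[OF Q] le d by simp
  ultimately show "Q r c + r' \<le> Q r' c' + r"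
    using quasi_array_ribbon_entry[OF Q cells(1)] quasi_array_ribbon_entry[OF Q cells(2)] d(1) by arith
qed

lemma ribbon_entries_strict_mono:
  assumes Q: "quasi_array m Q" and cells: "(r, c) \<in> ribbon_cells \<sigma>" "(r', c') \<in> ribbon_cells \<sigma>"
    and k: "r + c - 1 \<le> k" "k < r' + c' - 1" "Q 1 k < Q 1 (k + 1)"
  shows "Q r c + r' < Q r' c' + r"
proof -
  have d: "1 \<le> r" "1 \<le> r + c - 1" "r' + c' - 1 \<le> m"
    using cells by (auto simp: ribbon_cells_iff_diag_row)
  have "r \<le> r'"
    using ribbon_entries_mono(1)[OF Q cells] k by simp
  moreover have "Q 1 (r + c - 1) \<le> Q 1 k" "Q 1 (k + 1) \<le> Q 1 (r' + c' - 1)"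
    using quasi_array_first_row_mono[OF Q] k d by simp_all
  ultimately show ?thesis
    using quasi_array_ribbon_entry[OF Q cells(1)] quasi_array_ribbon_entry[OF Q cells(2)] d(1) k(3) by arith
qed

definition ribbon_increment :: "(nat \<Rightarrow> nat \<Rightarrow> nat) \<Rightarrow> (nat \<Rightarrow> nat \<Rightarrow> nat) \<Rightarrow> nat \<Rightarrow> bool" where
  "ribbon_increment Q Q' k \<longleftrightarrow> 1 \<le> k \<and> k \<le> m \<and>
     (\<forall>r c. (r, c) \<in> ribbon_cells \<sigma> \<longrightarrow> Q' r c = (if r + c - 1 = k then Q r c + 1 else Q r c))"

lemma ribbon_increment_first_row:
  assumes Q: "quasi_array m Q" and Q': "quasi_array m Q'" and inc: "ribbon_increment Q Q' k"
    and d: "1 \<le> d" "d \<le> m"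
  shows "Q' 1 d = (if d = k then Q 1 d + 1 else Q 1 d)"
proof -
  have "Q' (diag_row d) (diag_col d) =
      (if d = k then Q (diag_row d) (diag_col d) + 1 else Q (diag_row d) (diag_col d))"
    using inc diag_cell[OF d] unfolding ribbon_increment_def by simp
  then show ?thesis
    using quasi_array_diag_cell[OF Q d] quasi_array_diag_cell[OF Q' d] diag_row(1)[OF d]
    by (simp split: if_splits)
qed

lemma ribbon_increment_first_row_less:
  assumes Q: "quasi_array m Q" and Q': "quasi_array m Q'" and inc: "ribbon_increment Q Q' k"
    and "k < m"
  shows "Q 1 k < Q 1 (k + 1)"
proof -
  have "1 \<le> k"
    using inc by (simp add: ribbon_increment_def)
  with \<open>k < m\<close> have "Q' 1 k \<le> Q' 1 (k + 1)"
    using quasi_array_first_row_mono[OF Q'] by simp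
  with \<open>1 \<le> k\<close> \<open>k < m\<close> show ?thesis
    using ribbon_increment_first_row[OF Q Q' inc, of k] ribbon_increment_first_row[OF Q Q' inc, of "k + 1"]
    by simp
qed

lemma Dop_eq_Some_iff_ribbon_increment:
  assumes Q: "quasi_array m Q" and Q': "quasi_array m Q'"
  shows "Dop m k Q = Some Q' \<longleftrightarrow> ribbon_increment Q Q' k"
proof
  assume "Dop m k Q = Some Q'"
  then have "1 \<le> k" "k \<le> m"
    and "Q' = (\<lambda>i j. if (i, j) \<in> qcells m \<and> i + j - 1 = k then Q i j + 1 else Q i j)"
    unfolding Dop_def by (auto split: if_splits)
  then show "ribbon_increment Q Q' k"
    using ribbon_subset_qcells unfolding ribbon_increment_def by auto
next
  assume inc: "ribbon_increment Q Q' k"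
  then have k: "1 \<le> k" "k \<le> m"
    by (simp_all add: ribbon_increment_def)
  have defined: "(1 \<le> k \<and> k = m) \<or> (1 \<le> k \<and> k < m \<and> Q 1 k < Q 1 (k + 1))"
    using k ribbon_increment_first_row_less[OF Q Q' inc] by linarith
  have "(\<lambda>i j. if (i, j) \<in> qcells m \<and> i + j - 1 = k then Q i j + 1 else Q i j) = Q'"
  proof (intro ext)
    fix i j
    show "(if (i, j) \<in> qcells m \<and> i + j - 1 = k then Q i j + 1 else Q i j) = Q' i j"
    proof (cases "(i, j) \<in> qcells m")
      case True
      with qcells_diag[OF True] show ?thesis
        using True quasi_array_entry[OF Q True] quasi_array_entry[OF Q' True]
          ribbon_increment_first_row[OF Q Q' inc, of "i + j - 1"]
        by auto
    qed (simp add: quasi_array_outside[OF Q] quasi_array_outside[OF Q'])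
  qed
  with defined show "Dop m k Q = Some Q'"
    unfolding Dop_def by simp
qed

end

section \<open>Column reading\<close>

definition reading_before :: "nat \<times> nat \<Rightarrow> nat \<times> nat \<Rightarrow> bool" where
  "reading_before x y \<longleftrightarrow> snd x < snd y \<or> (snd x = snd y \<and> fst y < fst x)"

lemma asymp_reading_before: "asymp reading_before"
  by (rule asympI) (auto simp: reading_before_def)

context quasi_ribbon
begin

definition reading_cells :: "(nat \<times> nat) list" where
  "reading_cells = concat (map (\<lambda>c. map (\<lambda>r. (r, c))
     (rev (filter (\<lambda>r. (r, c) \<in> ribbon_cells \<sigma>) [1..<length \<sigma> + 1]))) [1..<m + 1])"

lemma col_reading_eq_map: "col_reading \<sigma> T = map (\<lambda>(r, c). T r c) reading_cells"
  unfolding col_reading_def reading_cells_def sum_list_composition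
  by (simp add: map_concat comp_def rev_map filter_map)

lemma set_reading_cells: "set reading_cells = ribbon_cells \<sigma>"
proof (intro equalityI subsetI)
  fix x
  assume "x \<in> set reading_cells"
  then show "x \<in> ribbon_cells \<sigma>"
    unfolding reading_cells_def by (auto simp del: upt_Suc)
next
  fix x
  assume x: "x \<in> ribbon_cells \<sigma>"
  obtain r c where rc: "x = (r, c)"
    by fastforce
  with x have c: "c \<in> set [1..<m + 1]"
    and r: "r \<in> set (rev (filter (\<lambda>r. (r, c) \<in> ribbon_cells \<sigma>) [1..<length \<sigma> + 1]))"
    using ribbon_cells_iff_last_diag[of r c] ribbon_cells_iff_diag_row[of r c] by (auto simp del: upt_Suc)
  show "x \<in> set reading_cells"
    unfolding reading_cells_def rc set_concat set_map
    by (rule UN_I[OF imageI[OF c]], unfold set_map, rule imageI[OF r])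
qed

lemma sorted_reading_cells: "sorted_wrt reading_before reading_cells"
proof -
  have "sorted_wrt reading_before (concat (map (\<lambda>c. map (\<lambda>r. (r, c))
     (rev (filter (\<lambda>r. (r, c) \<in> ribbon_cells \<sigma>) [1..<length \<sigma> + 1]))) cs))"
    if "sorted_wrt (<) cs" for cs
    using that
  proof (induction cs)
    case (Cons c cs)
    then show ?case
      by (auto simp: sorted_wrt_append sorted_wrt_map sorted_wrt_rev reading_before_def
          intro: sorted_wrt_filter simp del: upt_Suc)
  qed simp
  then show ?thesis
    unfolding reading_cells_def by (simp del: upt_Suc)
qed

lemma distinct_reading_cells: "distinct reading_cells"
proof -
  have "distinct xs" if "sorted_wrt reading_before xs" for xs
    using that by (induction xs) (auto simp: reading_before_def)
  then show ?thesis
    using sorted_reading_cells by blast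
qed

lemma col_reading_pi_sigma: "col_reading \<sigma> (pi_sigma \<sigma> Q) = map (\<lambda>(r, c). Q r c) reading_cells"
  unfolding col_reading_eq_map using set_reading_cells by (auto simp: pi_sigma_def)

lemma ribbon_entry_eq_before:
  assumes Q: "quasi_array m Q" and k: "1 \<le> k" "k \<le> m" "k < m \<longrightarrow> Q 1 k < Q 1 (k + 1)"
    and cell: "(r, c) \<in> ribbon_cells \<sigma>" and val: "Q r c = Q (diag_row k) (diag_col k)"
  shows "(r, c) = (diag_row k, diag_col k) \<or> reading_before (r, c) (diag_row k, diag_col k)"
proof -
  have x: "(diag_row k, diag_col k) \<in> ribbon_cells \<sigma>" "diag_row k + diag_col k = k + 1"
    using diag_cell[OF k(1,2)] by simp_all
  have "r + c - 1 \<le> m"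
    using cell by (simp add: ribbon_cells_iff_diag_row)
  show ?thesis
  proof (cases "r + c \<le> k + 1")
    case True
    then have "r \<le> diag_row k" "Q r c + diag_row k \<le> Q (diag_row k) (diag_col k) + r"
      using ribbon_entries_mono[OF Q cell x(1)] x(2) by simp_all
    with val have "r = diag_row k"
      by simp
    moreover from this have "c \<le> diag_col k"
      using True x(2) by simp
    ultimately show ?thesis
      by (auto simp: reading_before_def)
  next
    case False
    then have "Q (diag_row k) (diag_col k) + r < Q r c + diag_row k" "diag_row k \<le> r"
      using ribbon_entries_strict_mono[OF Q x(1) cell, of k] ribbon_entries_mono(1)[OF Q x(1) cell]
        x(2) k \<open>r + c - 1 \<le> m\<close> by simp_all
    with val show ?thesis
      by simp
  qed
qed

lemma ribbon_entry_succ_after: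
  assumes Q: "quasi_array m Q" and k: "1 \<le> k" "k \<le> m" "k < m \<longrightarrow> Q 1 k < Q 1 (k + 1)"
    and cell: "(r, c) \<in> ribbon_cells \<sigma>" and val: "Q r c = Q (diag_row k) (diag_col k) + 1"
  shows "reading_before (diag_row k, diag_col k) (r, c)"
proof -
  have x: "(diag_row k, diag_col k) \<in> ribbon_cells \<sigma>" "diag_row k + diag_col k = k + 1"
    using diag_cell[OF k(1,2)] by simp_all
  have "r + c - 1 \<le> m"
    using cell by (simp add: ribbon_cells_iff_diag_row)
  show ?thesis
  proof (cases "r + c \<le> k + 1")
    case True
    then have "r \<le> diag_row k" "Q r c + diag_row k \<le> Q (diag_row k) (diag_col k) + r"
      using ribbon_entries_mono[OF Q cell x(1)] x(2) by simp_all
    with val show ?thesis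
      by simp
  next
    case False
    then have "Q (diag_row k) (diag_col k) + r < Q r c + diag_row k" "diag_row k \<le> r"
      using ribbon_entries_strict_mono[OF Q x(1) cell, of k] ribbon_entries_mono(1)[OF Q x(1) cell]
        x(2) k \<open>r + c - 1 \<le> m\<close> by simp_all
    with val have "r = diag_row k"
      by simp
    with False x(2) show ?thesis
      by (simp add: reading_before_def)
  qed
qed

lemma qk_f_increments_diag_cell:
  assumes Q: "quasi_array m Q" and k: "1 \<le> k" "k \<le> m" "k < m \<longrightarrow> Q 1 k < Q 1 (k + 1)"
    and p: "p < length reading_cells" "reading_cells ! p = (diag_row k, diag_col k)"
  defines "u \<equiv> map (\<lambda>(r, c). Q r c) reading_cells" and "v \<equiv> Q (diag_row k) (diag_col k)"
  shows "qk_f v u = Some (u[p := v + 1])"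
proof -
  let ?xs = reading_cells and ?x = "(diag_row k, diag_col k)"
  have order: "q < q' \<longleftrightarrow> reading_before (?xs ! q) (?xs ! q')"
    if "q < length ?xs" "q' < length ?xs" for q q'
    using sorted_wrt_nth_less_iff[OF sorted_reading_cells asymp_reading_before that] .
  have entry: "q < length ?xs" "?xs ! q \<in> ribbon_cells \<sigma>" "u ! q = Q (fst (?xs ! q)) (snd (?xs ! q))"
    if "q < length u" for q
  proof -
    show "q < length ?xs"
      using that by (simp add: u_def)
    then show "?xs ! q \<in> ribbon_cells \<sigma>" "u ! q = Q (fst (?xs ! q)) (snd (?xs ! q))"
      using set_reading_cells nth_mem by (auto simp: u_def split: prod.splits)
  qed
  show ?thesis
  proof (rule qk_f_eq_SomeI)
    show "p < length u" "u ! p = v"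
      using p by (simp_all add: u_def v_def)
  next
    fix q
    assume q: "q < length u" "u ! q = v"
    then have "?xs ! q = ?x \<or> reading_before (?xs ! q) ?x"
      using ribbon_entry_eq_before[OF Q k, of "fst (?xs ! q)" "snd (?xs ! q)"] entry[OF q(1)]
      unfolding v_def by simp
    then show "q \<le> p"
      using order[OF entry(1)[OF q(1)] p(1)]
        nth_eq_iff_index_eq[OF distinct_reading_cells entry(1)[OF q(1)] p(1)] p(2)
      by auto
  next
    fix q
    assume q: "q < length u" "u ! q = v + 1"
    then have "reading_before ?x (?xs ! q)"
      using ribbon_entry_succ_after[OF Q k, of "fst (?xs ! q)" "snd (?xs ! q)"] entry[OF q(1)]
      unfolding v_def by simp
    then show "p < q"
      using order[OF p(1) entry(1)[OF q(1)]] p(2) by simp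
  qed
qed

lemma Gamma_edge_if_ribbon_increment:
  assumes Q: "quasi_array m Q" and Q': "quasi_array m Q'" and inc: "ribbon_increment Q Q' k"
  shows "Gamma_edge \<sigma> (pi_sigma \<sigma> Q) (pi_sigma \<sigma> Q')"
proof -
  let ?xs = reading_cells and ?x = "(diag_row k, diag_col k)"
  define u where "u = map (\<lambda>(r, c). Q r c) ?xs"
  define v where "v = Q (diag_row k) (diag_col k)"
  have k: "1 \<le> k" "k \<le> m" "k < m \<longrightarrow> Q 1 k < Q 1 (k + 1)"
    using inc ribbon_increment_first_row_less[OF Q Q' inc] by (auto simp: ribbon_increment_def)
  obtain p where p: "p < length ?xs" "?xs ! p = ?x"
    using diag_cell(1)[OF k(1,2)] set_reading_cells by (metis in_set_conv_nth)
  have "map (\<lambda>(r, c). Q' r c) ?xs = u[p := v + 1]"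
  proof -
    have "Q' r c = (if (r, c) = ?x then v + 1 else Q r c)" if "(r, c) \<in> ribbon_cells \<sigma>" for r c
    proof -
      have "Q' r c = (if r + c - 1 = k then Q r c + 1 else Q r c)"
        using inc that unfolding ribbon_increment_def by blast
      then show ?thesis
        using ribbon_cell_on_diag_iff[OF that k(1,2)] unfolding v_def by (cases "(r, c) = ?x") simp_all
    qed
    then show ?thesis
      unfolding u_def map_eq_list_update_iff[OF distinct_reading_cells p(1)] p(2) set_reading_cells
      by (auto split: if_splits)
  qed
  moreover have "qk_f v u = Some (u[p := v + 1])"
    unfolding u_def v_def using Q k p by (rule qk_f_increments_diag_cell)
  moreover have "1 \<le> v"
    using quasi_array_pos[OF Q subsetD[OF ribbon_subset_qcells diag_cell(1)[OF k(1,2)]]]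
    unfolding v_def by simp
  ultimately show ?thesis
    unfolding Gamma_edge_def col_reading_pi_sigma u_def[symmetric] by (intro exI[of _ v]) simp
qed

lemma ribbon_increment_if_Gamma_edge:
  assumes edge: "Gamma_edge \<sigma> (pi_sigma \<sigma> Q) (pi_sigma \<sigma> Q')"
  obtains k where "ribbon_increment Q Q' k"
proof -
  let ?xs = reading_cells
  obtain i where "qk_f i (map (\<lambda>(r, c). Q r c) ?xs) = Some (map (\<lambda>(r, c). Q' r c) ?xs)"
    using edge unfolding Gamma_edge_def col_reading_pi_sigma by blast
  then obtain p where p: "p < length ?xs"
    and upd: "map (\<lambda>(r, c). Q' r c) ?xs = (map (\<lambda>(r, c). Q r c) ?xs)[p := (\<lambda>(r, c). Q r c) (?xs ! p) + 1]"
    by (rule qk_f_eq_SomeD) auto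
  obtain r0 c0 where x: "?xs ! p = (r0, c0)"
    by fastforce
  have x_cell: "(r0, c0) \<in> ribbon_cells \<sigma>"
    using p x set_reading_cells nth_mem by metis
  then have k: "1 \<le> r0 + c0 - 1" "r0 + c0 - 1 \<le> m"
    by (auto simp: ribbon_cells_iff_diag_row)
  have "Q' r c = (if (r, c) = (r0, c0) then Q r c + 1 else Q r c)" if "(r, c) \<in> ribbon_cells \<sigma>" for r c
    using upd that x set_reading_cells unfolding map_eq_list_update_iff[OF distinct_reading_cells p] by auto
  then have "ribbon_increment Q Q' (r0 + c0 - 1)"
    unfolding ribbon_increment_def
    using k ribbon_cell_on_diag_iff[OF _ k] ribbon_cell_eq_diag_cell[OF x_cell] by auto
  then show thesis
    by (rule that)
qed

lemma Gamma_edge_iff_ribbon_increment: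
  assumes "quasi_array m Q" "quasi_array m Q'"
  shows "Gamma_edge \<sigma> (pi_sigma \<sigma> Q) (pi_sigma \<sigma> Q') \<longleftrightarrow> (\<exists>k. ribbon_increment Q Q' k)"
  using Gamma_edge_if_ribbon_increment[OF assms] ribbon_increment_if_Gamma_edge by blast

end

theorem theorem4p1:
  fixes m :: nat and \<sigma> :: "nat list"
  assumes "0 < m" and "composition \<sigma> m"
  shows "(\<forall>Q. quasi_array m Q \<longrightarrow> qrt \<sigma> (pi_sigma \<sigma> Q)) \<and>
         (\<forall>T. qrt \<sigma> T \<longrightarrow> quasi_array m (bar \<sigma> T)) \<and>
         (\<forall>Q. quasi_array m Q \<longrightarrow> bar \<sigma> (pi_sigma \<sigma> Q) = Q) \<and>
         (\<forall>T. qrt \<sigma> T \<longrightarrow> pi_sigma \<sigma> (bar \<sigma> T) = T) \<and>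
         (\<forall>Q Q'. quasi_array m Q \<and> quasi_array m Q' \<longrightarrow>
             (Delta_edge m Q Q' \<longleftrightarrow> Gamma_edge \<sigma> (pi_sigma \<sigma> Q) (pi_sigma \<sigma> Q')))"
proof -
  \<comment> \<open>The hypothesis 0 < m is implied by composition \<sigma> m.\<close>
  interpret quasi_ribbon \<sigma> m
    using assms(2) by unfold_locales
  have "Delta_edge m Q Q' \<longleftrightarrow> Gamma_edge \<sigma> (pi_sigma \<sigma> Q) (pi_sigma \<sigma> Q')"
    if "quasi_array m Q" "quasi_array m Q'" for Q Q'
    unfolding Delta_edge_def Dop_eq_Some_iff_ribbon_increment[OF that]
      Gamma_edge_iff_ribbon_increment[OF that] ..
  with qrt_pi_sigma bar_of_qrt bar_pi_sigma show ?thesis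
    by simp
qed

end
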